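(* Let $T$ be an anonymous and reasonable cardinal comparison test. If $T\not\sim\mathcal D$, then $T$ is not error-free. (In fact, if $T\not\sim_{\vec f}\mathcal D$ for a pair $\vec f$, then $T$ violates error-freeness.)
   Context: Let $\Omega=\{0,1\}$, $\Omega^\infty$ the set of infinite sequences $\omega=(\omega_1,\omega_2,\dots)$, and $\omega^t=(\omega_1,\dots,\omega_t)$ (also used for the cylinder set of all sequences with this prefix; $\omega^0=\emptyset$). $\mathcal G_t$ is the $\sigma$-algebra generated by the length-$t$ cylinders and $\mathcal G_\infty$ the $\sigma$-algebra generated by all cylinders. $\Delta(\Omega)$ is the set of probability distributions on $\Omega$; for $p\in\Delta(\Omega)$ and $x\in\Omega$, $p[x]$ is the probability of $x$. A forecasting strategy is a map $f:\bigcup_{t\ge0}(\Omega\times\Delta(\Omega)\times\Delta(\Omega))^t\to\Delta(\Omega)$; $F$ is the set of all forecasting strategies. Given an ordered pair $\vec f=(f,g)\in F\times F$ and $\omega\in\Omega^\infty$, the play path $(\omega,\vec f)$ is defined recursively: $(\omega,\vec f)^0=\emptyset$ and its $t$-th entry is $(\omega_t,f((\omega,\vec f)^{t-1}),g((\omega,\vec f)^{t-1}))$. The pair $\vec f$ induces two probability measures on $(\Omega^\infty,\mathcal G_\infty)$, again denoted $f$ and $g$, determined by $f(\omega^t)=\prod_{n=1}^t f((\omega,\vec f)^{n-1})[\omega_n]$ and $g(\omega^t)=\prod_{n=1}^t g((\omega,\vec f)^{n-1})[\omega_n]$. A (cardinal comparison) test is a sequence $T=(T_t)_{t>0}$ of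 $\mathcal G_t$-measurable functions $T_t:(\Omega\times\Delta(\Omega)\times\Delta(\Omega))^\infty\to[0,1]$; write $T_t(\omega,\vec f)=T_t((\omega,\vec f))$ and $T(\omega,\vec f)=\lim_t T_t(\omega,\vec f)$ whenever the limit exists. For $\epsilon\in(0,1)$ let $L^{\vec f}_{T,\epsilon}=\{\omega:T(\omega,\vec f)\text{ exists and }>\epsilon\}$ and $R^{\vec f}_{T,\epsilon}=\{\omega:T(\omega,\vec f)\text{ exists and }<\epsilon\}$. $T$ is anonymous if $T_t(\omega,f,g)=1-T_t(\omega,g,f)$ for all $\omega$, $t>0$, $f,g\in F$. $T$ is error-free if for all $\vec f=(f,g)$ and measurable $A\subseteq\Omega^\infty$: for all $\epsilon\in(0,\frac12)$, $f(A\cap R^{\vec f}_{T,\epsilon})\le\frac{\epsilon}{1-\epsilon}g(A\cap R^{\vec f}_{T,\epsilon})$, and for all $\epsilon\in(\frac12,1)$, $g(A\cap L^{\vec f}_{T,\epsilon})\le\frac{1-\epsilon}{\epsilon}f(A\cap L^{\vec f}_{T,\epsilon})$. $T$ is reasonable if for all $\vec f=(f,g)$ and measurable $A$: for $\epsilon\in(0,\frac12)$, if $g(A)>0$ and $f(A)<\frac{\epsilon}{1-\epsilon}g(A)$ then $g(A\cap R^{\vec f}_{T,\epsilon})>0$; and for $\epsilon\in(\frac12,1)$, if $f(A)>0$ and $g(A)<\frac{1-\epsilon}{\epsilon}f(A)$ then $f(A\cap L^{\vec f}_{T,\epsilon})>0$. The finite derivative test $\mathcal D$: for $t\ge0$,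 $\mathcal D_{t+1}(\omega,\vec f)=\frac{f(\omega^t)}{f(\omega^t)+g(\omega^t)}$ if $f(\omega^t)>0$ or $g(\omega^t)>0$, and $\frac12$ otherwise. Equivalence: $T\sim_{\vec f}\hat T$ if $f(N)=g(N)=0$ where $N=\{\omega: T(\omega,\vec f),\hat T(\omega,\vec f)\text{ both exist and differ}\}$; $T\sim\hat T$ if $T\sim_{\vec f}\hat T$ for all $\vec f\in F\times F$. *)

theory Defs
  imports "HOL-Probability.Probability"
begin

text \<open>Outcomes \<Omega> = {0,1} are represented by bool (True = 1), distributions
  \<Delta>(\<Omega>) by bool pmf, p[x] by pmf p x.  A history entry is
  (outcome, forecast of f, forecast of g); a finite history is a list of entries.\<close>

type_synonym entry = "bool \<times> bool pmf \<times> bool pmf"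
type_synonym strategy = "entry list \<Rightarrow> bool pmf"

text \<open>Infinite sequences \<omega> = (\<omega>_1, \<omega>_2, ...) are functions nat => bool with
  \<omega>_(n+1) = \<omega> n (0-indexed).  play w f g t is the length-t prefix (\<omega>,f,g)^t
  of the play path.\<close>

fun play :: "(nat \<Rightarrow> bool) \<Rightarrow> strategy \<Rightarrow> strategy \<Rightarrow> nat \<Rightarrow> entry list" where
  "play w f g 0 = []"
| "play w f g (Suc n) = (let h = play w f g n in h @ [(w n, f h, g h)])"

definition seq_space :: "(nat \<Rightarrow> bool) measure" where
  "seq_space = PiM UNIV (\<lambda>_. count_space UNIV)"

definition cyl :: "(nat \<Rightarrow> bool) \<Rightarrow> nat \<Rightarrow> (nat \<Rightarrow> bool) set" where
  "cyl w t = {v. \<forall>i<t. v i = w i}"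

definition induced_fst :: "(nat \<Rightarrow> bool) measure \<Rightarrow> strategy \<Rightarrow> strategy \<Rightarrow> bool" where
  "induced_fst M f g \<longleftrightarrow> prob_space M \<and> sets M = sets seq_space \<and>
     (\<forall>w t. measure M (cyl w t) = (\<Prod>n<t. pmf (f (play w f g n)) (w n)))"

definition induced_snd :: "(nat \<Rightarrow> bool) measure \<Rightarrow> strategy \<Rightarrow> strategy \<Rightarrow> bool" where
  "induced_snd M f g \<longleftrightarrow> prob_space M \<and> sets M = sets seq_space \<and>
     (\<forall>w t. measure M (cyl w t) = (\<Prod>n<t. pmf (g (play w f g n)) (w n)))"

text \<open>A test: T t h is T_t evaluated on a play path whose length-t prefix is h
  (G_t-measurability = dependence only on the first t entries). Only t > 0 matters.\<close>

type_synonym test = "nat \<Rightarrow> entry list \<Rightarrow> real"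

definition is_test :: "test \<Rightarrow> bool" where
  "is_test T \<longleftrightarrow> (\<forall>t h. 0 < t \<longrightarrow> 0 \<le> T t h \<and> T t h \<le> 1)"

definition test_seq :: "test \<Rightarrow> (nat \<Rightarrow> bool) \<Rightarrow> strategy \<Rightarrow> strategy \<Rightarrow> nat \<Rightarrow> real" where
  "test_seq T w f g t = T (Suc t) (play w f g (Suc t))"

definition L_set :: "test \<Rightarrow> strategy \<Rightarrow> strategy \<Rightarrow> real \<Rightarrow> (nat \<Rightarrow> bool) set" where
  "L_set T f g e = {w. \<exists>L. test_seq T w f g \<longlonglongrightarrow> L \<and> L > e}"

definition R_set :: "test \<Rightarrow> strategy \<Rightarrow> strategy \<Rightarrow> real \<Rightarrow> (nat \<Rightarrow> bool) set" where
  "R_set T f g e = {w. \<exists>L. test_seq T w f g \<longlonglongrightarrow> L \<and> L < e}"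

definition anonymous :: "test \<Rightarrow> bool" where
  "anonymous T \<longleftrightarrow> (\<forall>w t f g. 0 < t \<longrightarrow> T t (play w f g t) = 1 - T t (play w g f t))"

definition error_free :: "test \<Rightarrow> bool" where
  "error_free T \<longleftrightarrow> (\<forall>f g Mf Mg A. induced_fst Mf f g \<longrightarrow> induced_snd Mg f g \<longrightarrow>
      A \<in> sets seq_space \<longrightarrow>
      (\<forall>e. 0 < e \<and> e < 1/2 \<longrightarrow>
         measure Mf (A \<inter> R_set T f g e) \<le> e / (1 - e) * measure Mg (A \<inter> R_set T f g e)) \<and>
      (\<forall>e. 1/2 < e \<and> e < 1 \<longrightarrow>
         measure Mg (A \<inter> L_set T f g e) \<le> (1 - e) / e * measure Mf (A \<inter> L_set T f g e)))"

definition reasonable :: "test \<Rightarrow> bool" where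
  "reasonable T \<longleftrightarrow> (\<forall>f g Mf Mg A. induced_fst Mf f g \<longrightarrow> induced_snd Mg f g \<longrightarrow>
      A \<in> sets seq_space \<longrightarrow>
      (\<forall>e. 0 < e \<and> e < 1/2 \<longrightarrow> measure Mg A > 0 \<longrightarrow>
         measure Mf A < e / (1 - e) * measure Mg A \<longrightarrow>
         measure Mg (A \<inter> R_set T f g e) > 0) \<and>
      (\<forall>e. 1/2 < e \<and> e < 1 \<longrightarrow> measure Mf A > 0 \<longrightarrow>
         measure Mg A < (1 - e) / e * measure Mf A \<longrightarrow>
         measure Mf (A \<inter> L_set T f g e) > 0))"

text \<open>Finite derivative test: D_(t+1) uses the first t entries of the path.\<close>

definition D_test :: test where
  "D_test t h = (let h' = take (t - 1) h;
                     a = prod_list (map (\<lambda>(x, p, q). pmf p x) h');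
                     b = prod_list (map (\<lambda>(x, p, q). pmf q x) h')
                 in if a > 0 \<or> b > 0 then a / (a + b) else 1/2)"

definition equiv_on_pair :: "test \<Rightarrow> test \<Rightarrow> strategy \<Rightarrow> strategy \<Rightarrow> bool" where
  "equiv_on_pair T T' f g \<longleftrightarrow> (\<forall>Mf Mg. induced_fst Mf f g \<longrightarrow> induced_snd Mg f g \<longrightarrow>
     (let N = {w. \<exists>L L'. test_seq T w f g \<longlonglongrightarrow> L \<and> test_seq T' w f g \<longlonglongrightarrow> L' \<and> L \<noteq> L'}
      in measure Mf N = 0 \<and> measure Mg N = 0))"

definition test_equiv :: "test \<Rightarrow> test \<Rightarrow> bool" where
  "test_equiv T T' \<longleftrightarrow> (\<forall>f g. equiv_on_pair T T' f g)"

end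

theory Submission
  imports Defs
begin

(* If T and the finite derivative test D converge to different limits on a set charged by f or
  g, then rationals q < q' separate the limits on a set B, say lim T < q < q' < lim D (the other
  case is symmetric). Since D_(t+1) = f(w^t) / (f(w^t) + g(w^t)), the inequality
  q' g(C) <= (1 - q') f(C) holds for all long enough cylinders C through points of B, and
  approximating B by finite unions of cylinders transfers it to B itself. On the T side,
  error-freeness gives (1 - e) f(B) <= e g(B) with e = q if q < 1/2; otherwise reasonableness
  gives the same with e = (q + q')/2, because B avoids the set where lim T > e. As e < q', the two
  inequalities force f(B) = g(B) = 0, and countably many pairs (q, q') cover the disagreement set. *)

lemma space_seq_space [simp]: "space seq_space = UNIV"
  by (simp add: seq_space_def space_PiM)

lemma sets_seq_space:
  "sets seq_space = sigma_sets UNIV (prod_algebra UNIV (\<lambda>_::nat. count_space (UNIV :: bool set)))"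
  by (simp add: seq_space_def sets_PiM)

lemma mem_cyl_self [simp]: "w \<in> cyl w t"
  by (simp add: cyl_def)

lemma cyl_cong: "\<forall>i<t. v i = w i \<Longrightarrow> cyl v t = cyl w t"
  by (auto simp: cyl_def)

definition prefix_determined :: "nat \<Rightarrow> (nat \<Rightarrow> bool) set \<Rightarrow> bool" where
  "prefix_determined t A \<longleftrightarrow> (\<forall>v w. (\<forall>i<t. v i = w i) \<longrightarrow> (v \<in> A \<longleftrightarrow> w \<in> A))"

definition truncate_seq :: "nat \<Rightarrow> (nat \<Rightarrow> bool) \<Rightarrow> nat \<Rightarrow> bool" where
  "truncate_seq t w i = (i < t \<and> w i)"

lemma cyl_truncate_seq [simp]: "cyl (truncate_seq t w) t = cyl w t"
  by (auto simp: cyl_def truncate_seq_def)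

lemma finite_truncate_seq_image: "finite (truncate_seq t ` W)"
proof (rule finite_subset)
  show "truncate_seq t ` W \<subseteq> (\<lambda>xs i. i < t \<and> xs ! i) ` {xs. length xs = t}"
    by (auto simp: truncate_seq_def image_iff fun_eq_iff intro!: exI[of _ "map _ [0..<t]"])
  show "finite ((\<lambda>xs i. i < t \<and> xs ! i) ` {xs :: bool list. length xs = t})"
    using finite_lists_length_eq[of "UNIV :: bool set" t] by simp
qed

lemma UN_cyl_truncate_seq: "(\<Union>w\<in>W. cyl w t) = (\<Union>s\<in>truncate_seq t ` W. cyl s t)"
  by simp

lemma disjoint_cyl_truncate_seq: "disjoint_family_on (\<lambda>s. cyl s t) (truncate_seq t ` W)"
  by (auto simp: disjoint_family_on_def cyl_def truncate_seq_def fun_eq_iff)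

lemma cyl_sets: "cyl w t \<in> sets seq_space"
proof -
  have "cyl w t = {v \<in> space seq_space. \<forall>i\<in>{..<t}. v i = w i}"
    by (auto simp: cyl_def)
  also have "\<dots> \<in> sets seq_space"
    unfolding seq_space_def by measurable
  finally show ?thesis .
qed

lemma sets_UN_cyl: "(\<Union>w\<in>W. cyl w t) \<in> sets seq_space"
  by (subst UN_cyl_truncate_seq) (intro sets.finite_UN finite_truncate_seq_image cyl_sets)

lemma prefix_determined_eq_UN_cyl:
  "prefix_determined t A \<Longrightarrow> A = (\<Union>w\<in>A. cyl w t)"
  by (auto simp: prefix_determined_def cyl_def)

lemma prefix_determined_sets: "prefix_determined t A \<Longrightarrow> A \<in> sets seq_space"
  by (subst prefix_determined_eq_UN_cyl) (auto intro: sets_UN_cyl)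

lemma prefix_determined_mono:
  assumes "prefix_determined t A" "t \<le> t'"
  shows "prefix_determined t' A"
  unfolding prefix_determined_def
proof (intro allI impI)
  fix v w :: "nat \<Rightarrow> bool"
  assume "\<forall>i<t'. v i = w i"
  then have "\<forall>i<t. v i = w i"
    using assms(2) by simp
  then show "v \<in> A \<longleftrightarrow> w \<in> A"
    using assms(1) unfolding prefix_determined_def by blast
qed

lemma prefix_determined_Un:
  "prefix_determined t A \<Longrightarrow> prefix_determined t B \<Longrightarrow> prefix_determined t (A \<union> B)"
  unfolding prefix_determined_def by blast

lemma prefix_determined_Compl: "prefix_determined t A \<Longrightarrow> prefix_determined t (- A)"
  unfolding prefix_determined_def by blast

lemma borel_measurable_prefix_determined:
  fixes u :: "(nat \<Rightarrow> bool) \<Rightarrow> 'a :: topological_space"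
  assumes "\<And>v w. \<forall>i<t. v i = w i \<Longrightarrow> u v = u w"
  shows "u \<in> borel_measurable seq_space"
proof (rule measurableI)
  fix S :: "'a set"
  have "prefix_determined t (u -` S)"
    using assms unfolding prefix_determined_def by (metis vimage_eq)
  then show "u -` S \<inter> space seq_space \<in> sets seq_space"
    by (simp add: prefix_determined_sets)
qed auto

lemma play_cong: "\<forall>i<n. v i = w i \<Longrightarrow> play v f g n = play w f g n"
  by (induction n) (auto simp: Let_def)

lemma borel_measurable_test_seq [measurable]:
  "(\<lambda>w. test_seq X w f g t) \<in> borel_measurable seq_space"
  unfolding test_seq_def
  by (rule borel_measurable_prefix_determined[of "Suc t"]) (metis play_cong)

lemma limit_in_sets:
  assumes "S \<in> sets borel"
  shows "{w. \<exists>L. test_seq X w f g \<longlonglongrightarrow> L \<and> L \<in> S} \<in> sets seq_space"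
proof -
  note [measurable] = borel_measurable_lim_metric[OF borel_measurable_test_seq]
  have conv: "{w \<in> space seq_space. convergent (test_seq X w f g)} \<in> sets seq_space"
    using sets_Collect_Cauchy[OF borel_measurable_test_seq] by (simp add: Cauchy_convergent_iff)
  have "{w \<in> space seq_space. lim (test_seq X w f g) \<in> S} \<in> sets seq_space"
    using assms by measurable
  moreover have "{w. \<exists>L. test_seq X w f g \<longlonglongrightarrow> L \<and> L \<in> S}
      = {w \<in> space seq_space. convergent (test_seq X w f g)}
        \<inter> {w \<in> space seq_space. lim (test_seq X w f g) \<in> S}"
    by (auto simp: convergent_def limI)
  ultimately show ?thesis
    using conv by simp
qed

lemma R_set_sets: "R_set X f g e \<in> sets seq_space"
  using limit_in_sets[of "{..<e}"] by (simp add: R_set_def)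

lemma L_set_sets: "L_set X f g e \<in> sets seq_space"
  using limit_in_sets[of "{e<..}"] by (simp add: L_set_def)

lemma (in finite_measure) null_sets_if_measure_eq_0:
  "B \<in> sets M \<Longrightarrow> measure M B = 0 \<Longrightarrow> B \<in> null_sets M"
  by (simp add: null_setsI emeasure_eq_measure)

lemma (in finite_measure) measure_le_cover:
  assumes "X \<subseteq> Y \<union> Z" "Y \<in> sets M" "Z \<in> sets M"
  shows "measure M X \<le> measure M Y + measure M Z"
  using assms by (meson finite_measure_mono measure_Un_le sets.Un order_trans)

lemma measure_UN_cyl:
  assumes "finite_measure M" "sets M = sets seq_space"
  shows "measure M (\<Union>w\<in>W. cyl w t) = (\<Sum>s\<in>truncate_seq t ` W. measure M (cyl s t))"
proof -
  have "(\<lambda>s. cyl s t) ` truncate_seq t ` W \<subseteq> sets M"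
    using assms(2) cyl_sets by blast
  then have "measure M (\<Union>s\<in>truncate_seq t ` W. cyl s t) = (\<Sum>s\<in>truncate_seq t ` W. measure M (cyl s t))"
    by (intro finite_measure.finite_measure_finite_Union[OF assms(1)]
        finite_truncate_seq_image disjoint_cyl_truncate_seq)
  then show ?thesis
    by (simp only: UN_cyl_truncate_seq[symmetric])
qed

locale seq_measure_pair =
  M1: finite_measure M1 + M2: finite_measure M2 for M1 M2 :: "(nat \<Rightarrow> bool) measure" +
  assumes sets_M1: "sets M1 = sets seq_space"
    and sets_M2: "sets M2 = sets seq_space"
begin

abbreviation \<mu> :: "(nat \<Rightarrow> bool) set \<Rightarrow> real" where
  "\<mu> X \<equiv> measure M1 X + measure M2 X"

lemma \<mu>_le_cover:
  assumes "X \<subseteq> Y \<union> Z" "Y \<in> sets seq_space" "Z \<in> sets seq_space"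
  shows "\<mu> X \<le> \<mu> Y + \<mu> Z"
  using M1.measure_le_cover[OF assms(1)] M2.measure_le_cover[OF assms(1)] assms(2,3)
  by (simp add: sets_M1 sets_M2)

definition approximable :: "(nat \<Rightarrow> bool) set \<Rightarrow> bool" where
  "approximable B \<longleftrightarrow> (\<forall>e>0. \<exists>t A. prefix_determined t A \<and> \<mu> (sym_diff A B) < e)"

lemma approximable_prefix_determined: "prefix_determined t A \<Longrightarrow> approximable A"
  unfolding approximable_def by (intro allI impI exI[of _ t] exI[of _ A]) simp

lemma approximable_Compl:
  assumes "approximable B"
  shows "approximable (- B)"
  unfolding approximable_def
proof (intro allI impI)
  fix e :: real assume "0 < e"
  then obtain t A where "prefix_determined t A" "\<mu> (sym_diff A B) < e"
    using assms unfolding approximable_def by blast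
  moreover have "sym_diff (- A) (- B) = sym_diff A B"
    by blast
  ultimately show "\<exists>t A. prefix_determined t A \<and> \<mu> (sym_diff A (- B)) < e"
    using prefix_determined_Compl by metis
qed

lemma approximable_Un:
  assumes "B1 \<in> sets seq_space" "B2 \<in> sets seq_space" "approximable B1" "approximable B2"
  shows "approximable (B1 \<union> B2)"
  unfolding approximable_def
proof (intro allI impI)
  fix e :: real assume "e > 0"
  then obtain t1 A1 t2 A2 where A1: "prefix_determined t1 A1" "\<mu> (sym_diff A1 B1) < e/2"
    and A2: "prefix_determined t2 A2" "\<mu> (sym_diff A2 B2) < e/2"
    using assms(3,4) unfolding approximable_def by (meson half_gt_zero)
  have "prefix_determined (max t1 t2) (A1 \<union> A2)"
    using A1(1) A2(1) by (intro prefix_determined_Un) (auto elim: prefix_determined_mono)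
  moreover have "\<mu> (sym_diff (A1 \<union> A2) (B1 \<union> B2)) \<le> \<mu> (sym_diff A1 B1) + \<mu> (sym_diff A2 B2)"
    using A1(1) A2(1) assms(1,2) by (intro \<mu>_le_cover) (auto dest: prefix_determined_sets)
  ultimately show "\<exists>t A. prefix_determined t A \<and> \<mu> (sym_diff A (B1 \<union> B2)) < e"
    using A1(2) A2(2) by fastforce
qed

lemma approximable_finite_UN:
  fixes B :: "nat \<Rightarrow> (nat \<Rightarrow> bool) set"
  assumes "\<And>i. B i \<in> sets seq_space" "\<And>i. approximable (B i)"
  shows "approximable (\<Union>i<n. B i)"
proof (induction n)
  case 0
  show ?case using approximable_prefix_determined[of 0 "{}"] by (simp add: prefix_determined_def)
next
  case (Suc n)
  then show ?case using assms by (simp add: lessThan_Suc approximable_Un)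
qed

lemma approximable_UN:
  fixes B :: "nat \<Rightarrow> (nat \<Rightarrow> bool) set"
  assumes B: "\<And>i. B i \<in> sets seq_space" and approx: "\<And>i. approximable (B i)"
  shows "approximable (\<Union>i. B i)"
  unfolding approximable_def
proof (intro allI impI)
  fix e :: real assume e: "e > 0"
  define C where "C n = (\<Union>i<n. B i)" for n
  have C: "C n \<in> sets seq_space" for n
    using B by (auto simp: C_def)
  have U: "(\<Union>i. B i) \<in> sets seq_space"
    by (rule sets.countable_UN) (use B in blast)
  have inc: "incseq C"
    unfolding C_def incseq_def by (intro allI impI UN_mono) auto
  have UN_C: "(\<Union>n. C n) = (\<Union>i. B i)"
    by (auto simp: C_def)
  have "(\<lambda>n. measure M1 (C n)) \<longlonglongrightarrow> measure M1 (\<Union>i. B i)"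
    using M1.finite_Lim_measure_incseq[OF _ inc] C UN_C by (simp add: sets_M1 image_subset_iff)
  moreover have "(\<lambda>n. measure M2 (C n)) \<longlonglongrightarrow> measure M2 (\<Union>i. B i)"
    using M2.finite_Lim_measure_incseq[OF _ inc] C UN_C by (simp add: sets_M2 image_subset_iff)
  ultimately have "(\<lambda>n. \<mu> (C n)) \<longlonglongrightarrow> \<mu> (\<Union>i. B i)"
    by (rule tendsto_add)
  then have "\<forall>\<^sub>F n in sequentially. \<mu> (\<Union>i. B i) - e/2 < \<mu> (C n)"
    using e by (intro order_tendstoD) auto
  then obtain n where n: "\<mu> (\<Union>i. B i) - e/2 < \<mu> (C n)"
    by (auto simp: eventually_sequentially)
  have "C n \<subseteq> (\<Union>i. B i)"
    by (auto simp: C_def)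
  then have "measure M1 ((\<Union>i. B i) - C n) = measure M1 (\<Union>i. B i) - measure M1 (C n)"
    and "measure M2 ((\<Union>i. B i) - C n) = measure M2 (\<Union>i. B i) - measure M2 (C n)"
    using C U by (simp_all add: M1.finite_measure_Diff M2.finite_measure_Diff sets_M1 sets_M2)
  with n have rest: "\<mu> ((\<Union>i. B i) - C n) < e/2"
    by simp
  obtain t A where A: "prefix_determined t A" "\<mu> (sym_diff A (C n)) < e/2"
    using approximable_finite_UN[OF B approx, where n = n] e unfolding approximable_def C_def
    by (meson half_gt_zero)
  have "sym_diff A (\<Union>i. B i) \<subseteq> sym_diff A (C n) \<union> ((\<Union>i. B i) - C n)"
    by (auto simp: C_def)
  then have "\<mu> (sym_diff A (\<Union>i. B i)) \<le> \<mu> (sym_diff A (C n)) + \<mu> ((\<Union>i. B i) - C n)"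
    using prefix_determined_sets[OF A(1)] C U by (intro \<mu>_le_cover) auto
  with A rest show "\<exists>t A. prefix_determined t A \<and> \<mu> (sym_diff A (\<Union>i. B i)) < e"
    by (intro exI[of _ t] exI[of _ A]) simp
qed

lemma approximable_sets:
  assumes "B \<in> sets seq_space"
  shows "approximable B"
proof -
  have "B \<in> sigma_sets UNIV (prod_algebra UNIV (\<lambda>_::nat. count_space (UNIV :: bool set)))"
    using assms by (simp add: sets_seq_space)
  then show ?thesis
  proof (induction rule: sigma_sets.induct)
    case (Basic a)
    then obtain J E where a: "a = prod_emb UNIV (\<lambda>_. count_space UNIV) J (\<Pi>\<^sub>E j\<in>J. E j)"
      and "finite J"
      by (metis prod_algebraE)
    then obtain t where "J \<subseteq> {..<t}"
      using finite_nat_bounded by blast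
    then have "prefix_determined t a"
      by (auto simp: prefix_determined_def a prod_emb_def restrict_def subset_iff)
    then show ?case
      by (rule approximable_prefix_determined)
  next
    case Empty
    show ?case
      using approximable_prefix_determined[of 0 "{}"] by (simp add: prefix_determined_def)
  next
    case (Compl a)
    then show ?case
      using approximable_Compl by (simp add: Compl_eq_Diff_UNIV)
  next
    case (Union B)
    then show ?case
      using approximable_UN[of B] by (simp add: sets_seq_space)
  qed
qed

lemma measure_le_on_UN_cyl:
  assumes "\<And>w. w \<in> W \<Longrightarrow> b * measure M2 (cyl w t) \<le> a * measure M1 (cyl w t)"
  shows "b * measure M2 (\<Union>w\<in>W. cyl w t) \<le> a * measure M1 (\<Union>w\<in>W. cyl w t)"
  unfolding measure_UN_cyl[OF M1.finite_measure_axioms sets_M1]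
    measure_UN_cyl[OF M2.finite_measure_axioms sets_M2] sum_distrib_left
  using assms by (intro sum_mono) auto

lemma measure_le_if_cylinders_le_from:
  assumes a: "0 \<le> a" and b: "0 \<le> b" and B: "B \<in> sets seq_space"
    and le: "\<And>w t. w \<in> B \<Longrightarrow> n \<le> t \<Longrightarrow> b * measure M2 (cyl w t) \<le> a * measure M1 (cyl w t)"
  shows "b * measure M2 B \<le> a * measure M1 B"
proof (rule field_le_epsilon)
  fix e :: real assume "0 < e"
  define d where "d = e / (a + b + 1)"
  have "0 < d" using a b \<open>0 < e\<close> by (simp add: d_def)
  then obtain t0 A where A0: "prefix_determined t0 A" and d: "\<mu> (sym_diff A B) < d"
    using approximable_sets[OF B] unfolding approximable_def by blast
  have A: "prefix_determined (max t0 n) A"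
    by (rule prefix_determined_mono[OF A0]) simp
  \<comment> \<open>On the cylinders of length \<open>max t0 n\<close> through \<open>A \<inter> B\<close> the inequality holds termwise,
    and their union \<open>A'\<close> lies between \<open>A \<inter> B\<close> and \<open>A\<close>.\<close>
  define A' where "A' = (\<Union>w\<in>A \<inter> B. cyl w (max t0 n))"
  have A'_sub: "A' \<subseteq> A"
    using prefix_determined_eq_UN_cyl[OF A] by (auto simp: A'_def)
  have sub_A': "A \<inter> B \<subseteq> A'"
    by (auto simp: A'_def)
  have sd: "sym_diff A B \<in> sets seq_space"
    using A B by (auto dest: prefix_determined_sets)
  have "measure M1 A' \<le> measure M1 B + measure M1 (sym_diff A B)"
    using A'_sub B sd by (intro M1.measure_le_cover) (auto simp: sets_M1)
  then have d1: "measure M1 A' \<le> measure M1 B + d"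
    using d measure_nonneg[of M2 "sym_diff A B"] by linarith
  have "measure M2 B \<le> measure M2 A' + measure M2 (sym_diff A B)"
    using sub_A' sd by (intro M2.measure_le_cover) (auto simp: sets_M2 A'_def intro: sets_UN_cyl)
  then have d2: "measure M2 B \<le> measure M2 A' + d"
    using d measure_nonneg[of M1 "sym_diff A B"] by linarith
  have "b * measure M2 A' \<le> a * measure M1 A'"
    unfolding A'_def using le by (intro measure_le_on_UN_cyl) auto
  then have "b * measure M2 B \<le> a * measure M1 B + (a + b) * d"
    using mult_left_mono[OF d1 a] mult_left_mono[OF d2 b] by (simp add: algebra_simps)
  moreover have "(a + b) * d \<le> e"
    using a b \<open>0 < e\<close> by (simp add: d_def field_simps)
  ultimately show "b * measure M2 B \<le> a * measure M1 B + e"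
    by linarith
qed

lemma measure_le_if_eventually_cylinders_le:
  assumes a: "0 \<le> a" and b: "0 \<le> b" and B: "B \<in> sets seq_space"
    and ev: "\<And>w. w \<in> B \<Longrightarrow>
      \<forall>\<^sub>F t in sequentially. b * measure M2 (cyl w t) \<le> a * measure M1 (cyl w t)"
  shows "b * measure M2 B \<le> a * measure M1 B"
proof -
  define P where "P t = {w. b * measure M2 (cyl w t) \<le> a * measure M1 (cyl w t)}" for t
  define C where "C n = B \<inter> (\<Inter>t\<in>{n..}. P t)" for n
  have "prefix_determined t (P t)" for t
    unfolding prefix_determined_def P_def by (metis (no_types, lifting) cyl_cong mem_Collect_eq)
  then have "P t \<in> sets seq_space" for t
    by (rule prefix_determined_sets)
  then have C: "C n \<in> sets seq_space" for n
    unfolding C_def using B sets.top[of seq_space]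
    by (intro sets.Int sets.countable_INT'') auto
  have inc: "incseq C"
    unfolding incseq_def C_def by auto
  have UN_C: "(\<Union>n. C n) = B"
  proof
    show "B \<subseteq> (\<Union>n. C n)"
    proof
      fix w assume "w \<in> B"
      then obtain N where "\<forall>t\<ge>N. b * measure M2 (cyl w t) \<le> a * measure M1 (cyl w t)"
        using ev[of w] by (auto simp: eventually_sequentially)
      with \<open>w \<in> B\<close> show "w \<in> (\<Union>n. C n)"
        by (auto simp: C_def P_def)
    qed
  qed (auto simp: C_def)
  have "(\<lambda>n. measure M1 (C n)) \<longlonglongrightarrow> measure M1 B"
    using M1.finite_Lim_measure_incseq[OF _ inc] C UN_C by (simp add: sets_M1 image_subset_iff)
  moreover have "(\<lambda>n. measure M2 (C n)) \<longlonglongrightarrow> measure M2 B"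
    using M2.finite_Lim_measure_incseq[OF _ inc] C UN_C by (simp add: sets_M2 image_subset_iff)
  moreover have "b * measure M2 (C n) \<le> a * measure M1 (C n)" for n
  proof (rule measure_le_if_cylinders_le_from[OF a b C])
    fix w t assume "w \<in> C n" "n \<le> t"
    then show "b * measure M2 (cyl w t) \<le> a * measure M1 (cyl w t)"
      by (auto simp: C_def P_def)
  qed
  ultimately show ?thesis
    by (intro LIMSEQ_le[OF tendsto_mult_left tendsto_mult_left]) auto
qed

end

lemma seq_measure_pair_induced:
  assumes "induced_fst Mf f g" "induced_snd Mg f g"
  shows "seq_measure_pair Mf Mg" "seq_measure_pair Mg Mf"
  using assms unfolding induced_fst_def induced_snd_def seq_measure_pair_def
    seq_measure_pair_axioms_def prob_space_def by auto

lemma length_play [simp]: "length (play w f g t) = t"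
  by (induction t) (auto simp: Let_def)

lemma prod_list_play:
  "prod_list (map (\<lambda>(x, p, q). pmf p x) (play w f g t)) = (\<Prod>n<t. pmf (f (play w f g n)) (w n))"
  "prod_list (map (\<lambda>(x, p, q). pmf q x) (play w f g t)) = (\<Prod>n<t. pmf (g (play w f g n)) (w n))"
  by (induction t) (auto simp: Let_def)

lemma test_seq_D_test:
  assumes "induced_fst Mf f g" "induced_snd Mg f g"
  shows "test_seq D_test w f g t =
    (let x = measure Mf (cyl w t); y = measure Mg (cyl w t)
     in if 0 < x \<or> 0 < y then x / (x + y) else 1/2)"
proof -
  have "take t (play w f g (Suc t)) = play w f g t"
    by (simp add: Let_def)
  then show ?thesis
    using assms unfolding test_seq_def D_test_def induced_fst_def induced_snd_def
    by (simp add: prod_list_play Let_def)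
qed

lemma mult_le_if_ratio_ge:
  fixes x y c :: real
  assumes "0 \<le> x" "0 \<le> y" "c \<le> (if 0 < x \<or> 0 < y then x / (x + y) else 1/2)"
  shows "c * y \<le> (1 - c) * x"
  using assms by (cases "0 < x \<or> 0 < y") (auto simp: field_simps split: if_splits)

lemma mult_le_if_ratio_le:
  fixes x y c :: real
  assumes "0 \<le> x" "0 \<le> y" "(if 0 < x \<or> 0 < y then x / (x + y) else 1/2) \<le> c"
  shows "(1 - c) * x \<le> c * y"
  using assms by (cases "0 < x \<or> 0 < y") (auto simp: field_simps split: if_splits)

lemma measure_le_on_L_set_D_test:
  assumes ind: "induced_fst Mf f g" "induced_snd Mg f g" and c: "0 \<le> c" "c \<le> 1"
    and B: "B \<in> sets seq_space" "B \<subseteq> L_set D_test f g c"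
  shows "c * measure Mg B \<le> (1 - c) * measure Mf B"
proof (rule seq_measure_pair.measure_le_if_eventually_cylinders_le
    [OF seq_measure_pair_induced(1)[OF ind]])
  fix w assume "w \<in> B"
  then obtain L where "test_seq D_test w f g \<longlonglongrightarrow> L" "c < L"
    using B unfolding L_set_def by auto
  then have "\<forall>\<^sub>F t in sequentially. c < test_seq D_test w f g t"
    by (rule order_tendstoD)
  then show "\<forall>\<^sub>F t in sequentially. c * measure Mg (cyl w t) \<le> (1 - c) * measure Mf (cyl w t)"
    by eventually_elim (rule mult_le_if_ratio_ge, auto simp: test_seq_D_test[OF ind] Let_def)
qed (use c B in auto)

lemma measure_le_on_R_set_D_test:
  assumes ind: "induced_fst Mf f g" "induced_snd Mg f g" and c: "0 \<le> c" "c \<le> 1"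
    and B: "B \<in> sets seq_space" "B \<subseteq> R_set D_test f g c"
  shows "(1 - c) * measure Mf B \<le> c * measure Mg B"
proof (rule seq_measure_pair.measure_le_if_eventually_cylinders_le
    [OF seq_measure_pair_induced(2)[OF ind]])
  fix w assume "w \<in> B"
  then obtain L where "test_seq D_test w f g \<longlonglongrightarrow> L" "L < c"
    using B unfolding R_set_def by auto
  then have "\<forall>\<^sub>F t in sequentially. test_seq D_test w f g t < c"
    by (rule order_tendstoD)
  then show "\<forall>\<^sub>F t in sequentially. (1 - c) * measure Mf (cyl w t) \<le> c * measure Mg (cyl w t)"
    by eventually_elim (rule mult_le_if_ratio_le, auto simp: test_seq_D_test[OF ind] Let_def)
qed (use c B in auto)

lemma error_free_R_set:
  assumes "error_free T" "induced_fst Mf f g" "induced_snd Mg f g"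
    and "B \<in> sets seq_space" "B \<subseteq> R_set T f g e" "0 < e" "e < 1/2"
  shows "(1 - e) * measure Mf B \<le> e * measure Mg B"
proof -
  have "measure Mf (B \<inter> R_set T f g e) \<le> e / (1 - e) * measure Mg (B \<inter> R_set T f g e)"
    using assms(1-4,6,7) unfolding error_free_def by blast
  then show ?thesis
    using assms(5-7) by (simp add: Int_absorb2 field_simps)
qed

lemma error_free_L_set:
  assumes "error_free T" "induced_fst Mf f g" "induced_snd Mg f g"
    and "B \<in> sets seq_space" "B \<subseteq> L_set T f g e" "1/2 < e" "e < 1"
  shows "e * measure Mg B \<le> (1 - e) * measure Mf B"
proof -
  have "measure Mg (B \<inter> L_set T f g e) \<le> (1 - e) / e * measure Mf (B \<inter> L_set T f g e)"
    using assms(1-4,6,7) unfolding error_free_def by blast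
  then show ?thesis
    using assms(5-7) by (simp add: Int_absorb2 field_simps)
qed

lemma reasonable_outside_R_set:
  assumes "reasonable T" "induced_fst Mf f g" "induced_snd Mg f g"
    and "B \<in> sets seq_space" "B \<inter> R_set T f g e = {}" "0 < e" "e < 1/2"
  shows "e * measure Mg B \<le> (1 - e) * measure Mf B"
proof (rule ccontr)
  assume neg: "\<not> ?thesis"
  have "0 \<le> (1 - e) * measure Mf B"
    using assms(7) by simp
  with neg have "0 < e * measure Mg B"
    by linarith
  then have "0 < measure Mg B"
    using assms(6) by (simp add: zero_less_mult_iff)
  moreover have "measure Mf B < e / (1 - e) * measure Mg B"
    using neg assms(6,7) by (simp add: field_simps)
  ultimately have "0 < measure Mg (B \<inter> R_set T f g e)"
    using assms(1-4,6,7) unfolding reasonable_def by blast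
  with assms(5) show False
    by simp
qed

lemma reasonable_outside_L_set:
  assumes "reasonable T" "induced_fst Mf f g" "induced_snd Mg f g"
    and "B \<in> sets seq_space" "B \<inter> L_set T f g e = {}" "1/2 < e" "e < 1"
  shows "(1 - e) * measure Mf B \<le> e * measure Mg B"
proof (rule ccontr)
  assume neg: "\<not> ?thesis"
  have "0 \<le> e * measure Mg B"
    using assms(6) by simp
  with neg have "0 < (1 - e) * measure Mf B"
    by linarith
  then have "0 < measure Mf B"
    using assms(7) by (simp add: zero_less_mult_iff)
  moreover have "measure Mg B < (1 - e) / e * measure Mf B"
    using neg assms(6,7) by (simp add: field_simps)
  ultimately have "0 < measure Mf (B \<inter> L_set T f g e)"
    using assms(1-4,6,7) unfolding reasonable_def by blast
  with assms(5) show False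
    by simp
qed

lemma eq_0_if_opposite_ratio_bounds:
  fixes x y c d :: real
  assumes "c < d" "0 \<le> x" "0 \<le> y" "(1 - c) * x \<le> c * y" "d * y \<le> (1 - d) * x"
  shows "x = 0 \<and> y = 0"
proof -
  have "(d - c) * (x + y) \<le> 0"
    using assms(4,5) by (simp add: algebra_simps)
  then show ?thesis
    using assms(1-3) by (simp add: mult_le_0_iff)
qed

lemma is_test_D_test: "is_test D_test"
  unfolding is_test_def
proof (intro allI impI)
  fix t and h :: "entry list"
  define x where "x = prod_list (map (\<lambda>(x, p, q). pmf p x) (take (t - 1) h))"
  define y where "y = prod_list (map (\<lambda>(x, p, q). pmf q x) (take (t - 1) h))"
  have "0 \<le> x" "0 \<le> y"
    unfolding x_def y_def by (auto intro!: prod_list_nonneg)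
  moreover have "D_test t h = (if 0 < x \<or> 0 < y then x / (x + y) else 1/2)"
    by (simp add: D_test_def x_def y_def Let_def)
  ultimately show "0 \<le> D_test t h \<and> D_test t h \<le> 1"
    by (auto simp: field_simps)
qed

lemma test_seq_limit_bounds:
  assumes "is_test X" "test_seq X w f g \<longlonglongrightarrow> L"
  shows "0 \<le> L" "L \<le> 1"
proof -
  have "0 \<le> test_seq X w f g t \<and> test_seq X w f g t \<le> 1" for t
    using assms(1) unfolding is_test_def test_seq_def by auto
  then show "0 \<le> L" "L \<le> 1"
    using assms(2) by (meson LIMSEQ_le_const LIMSEQ_le_const2)+
qed

lemma R_set_pos: "is_test X \<Longrightarrow> w \<in> R_set X f g q \<Longrightarrow> 0 < q"
  unfolding R_set_def by (fastforce dest: test_seq_limit_bounds(1))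

lemma L_set_lt_1: "is_test X \<Longrightarrow> w \<in> L_set X f g q \<Longrightarrow> q < 1"
  unfolding L_set_def by (fastforce dest: test_seq_limit_bounds(2))

lemma R_set_Int_L_set: "q \<le> e \<Longrightarrow> R_set X f g q \<inter> L_set X f g e = {}"
  unfolding R_set_def L_set_def using LIMSEQ_unique by fastforce

lemma measure_zero_if_subset_null: "N \<subseteq> Z \<Longrightarrow> Z \<in> null_sets M \<Longrightarrow> measure M N = 0"
  by (metis measure_eq_0_null_sets measure_notin_sets null_sets_subset)

lemma null_where_T_below_D:
  assumes T: "is_test T" "reasonable T" "error_free T"
    and ind: "induced_fst Mf f g" "induced_snd Mg f g" and "q < q'"
  defines "B \<equiv> R_set T f g q \<inter> L_set D_test f g q'"
  shows "B \<in> null_sets Mf \<and> B \<in> null_sets Mg"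
proof (cases "B = {}")
  case False
  interpret seq_measure_pair Mf Mg
    by (rule seq_measure_pair_induced(1)[OF ind])
  from False obtain w where "w \<in> R_set T f g q" "w \<in> L_set D_test f g q'"
    by (auto simp: B_def)
  then have q: "0 < q" "q' < 1"
    using T(1) is_test_D_test by (auto dest: R_set_pos L_set_lt_1)
  have B: "B \<in> sets seq_space"
    unfolding B_def by (intro sets.Int R_set_sets L_set_sets)
  have upper: "q' * measure Mg B \<le> (1 - q') * measure Mf B"
    using measure_le_on_L_set_D_test[OF ind _ _ B] q \<open>q < q'\<close> by (simp add: B_def)
  obtain e where "e < q'" "(1 - e) * measure Mf B \<le> e * measure Mg B"
  proof (cases "q < 1/2")
    case True
    have "(1 - q) * measure Mf B \<le> q * measure Mg B"
      by (rule error_free_R_set[OF T(3) ind B]) (use q True in \<open>auto simp: B_def\<close>)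
    then show ?thesis
      by (rule that[rotated]) (use \<open>q < q'\<close> in simp)
  next
    case False
    have "B \<inter> L_set T f g ((q + q') / 2) = {}"
      using R_set_Int_L_set[of q "(q + q') / 2" T f g] \<open>q < q'\<close> by (auto simp: B_def)
    moreover have "1/2 < (q + q') / 2" "(q + q') / 2 < 1"
      using False q \<open>q < q'\<close> by auto
    ultimately have "(1 - (q + q') / 2) * measure Mf B \<le> (q + q') / 2 * measure Mg B"
      by (rule reasonable_outside_L_set[OF T(2) ind B])
    then show ?thesis
      by (rule that[rotated]) (use \<open>q < q'\<close> in simp)
  qed
  then have "measure Mf B = 0 \<and> measure Mg B = 0"
    using eq_0_if_opposite_ratio_bounds upper by (meson measure_nonneg)
  with B show ?thesis
    by (simp add: M1.null_sets_if_measure_eq_0 M2.null_sets_if_measure_eq_0 sets_M1 sets_M2)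
qed simp

lemma null_where_T_above_D:
  assumes T: "is_test T" "reasonable T" "error_free T"
    and ind: "induced_fst Mf f g" "induced_snd Mg f g" and "q < q'"
  defines "B \<equiv> R_set D_test f g q \<inter> L_set T f g q'"
  shows "B \<in> null_sets Mf \<and> B \<in> null_sets Mg"
proof (cases "B = {}")
  case False
  interpret seq_measure_pair Mf Mg
    by (rule seq_measure_pair_induced(1)[OF ind])
  from False obtain w where "w \<in> R_set D_test f g q" "w \<in> L_set T f g q'"
    by (auto simp: B_def)
  then have q: "0 < q" "q' < 1"
    using T(1) is_test_D_test by (auto dest: R_set_pos L_set_lt_1)
  have B: "B \<in> sets seq_space"
    unfolding B_def by (intro sets.Int R_set_sets L_set_sets)
  have lower: "(1 - q) * measure Mf B \<le> q * measure Mg B"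
    using measure_le_on_R_set_D_test[OF ind _ _ B] q \<open>q < q'\<close> by (simp add: B_def)
  obtain e where "q < e" "e * measure Mg B \<le> (1 - e) * measure Mf B"
  proof (cases "1/2 < q'")
    case True
    have "q' * measure Mg B \<le> (1 - q') * measure Mf B"
      by (rule error_free_L_set[OF T(3) ind B]) (use q True in \<open>auto simp: B_def\<close>)
    then show ?thesis
      by (rule that[rotated]) (use \<open>q < q'\<close> in simp)
  next
    case False
    have "B \<inter> R_set T f g ((q + q') / 2) = {}"
      using R_set_Int_L_set[of "(q + q') / 2" q' T f g] \<open>q < q'\<close> by (auto simp: B_def)
    moreover have "0 < (q + q') / 2" "(q + q') / 2 < 1/2"
      using False q \<open>q < q'\<close> by auto
    ultimately have "(q + q') / 2 * measure Mg B \<le> (1 - (q + q') / 2) * measure Mf B"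
      by (rule reasonable_outside_R_set[OF T(2) ind B])
    then show ?thesis
      by (rule that[rotated]) (use \<open>q < q'\<close> in simp)
  qed
  then have "measure Mf B = 0 \<and> measure Mg B = 0"
    using eq_0_if_opposite_ratio_bounds lower by (meson measure_nonneg)
  with B show ?thesis
    by (simp add: M1.null_sets_if_measure_eq_0 M2.null_sets_if_measure_eq_0 sets_M1 sets_M2)
qed simp

definition disagreement :: "test \<Rightarrow> test \<Rightarrow> strategy \<Rightarrow> strategy \<Rightarrow> (nat \<Rightarrow> bool) set" where
  "disagreement X Y f g =
    {w. \<exists>L L'. test_seq X w f g \<longlonglongrightarrow> L \<and> test_seq Y w f g \<longlonglongrightarrow> L' \<and> L \<noteq> L'}"

lemma disagreement_subset_UN:
  "disagreement X Y f g \<subseteq> (\<Union>p\<in>{p \<in> \<rat> \<times> \<rat>. fst p < snd p}.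
      R_set X f g (fst p) \<inter> L_set Y f g (snd p) \<union> R_set Y f g (fst p) \<inter> L_set X f g (snd p))"
proof
  fix w assume "w \<in> disagreement X Y f g"
  then obtain L L' where L: "test_seq X w f g \<longlonglongrightarrow> L" "test_seq Y w f g \<longlonglongrightarrow> L'" "L \<noteq> L'"
    by (auto simp: disagreement_def)
  have rats_between: "\<exists>q\<in>\<rat>. \<exists>q'\<in>\<rat>. a < q \<and> q < q' \<and> q' < b" if "a < b" for a b :: real
    by (meson Rats_dense_in_real that)
  consider "L < L'" | "L' < L"
    using L(3) by linarith
  then obtain q q' where "q \<in> \<rat>" "q' \<in> \<rat>" "q < q'"
    and "w \<in> R_set X f g q \<inter> L_set Y f g q' \<union> R_set Y f g q \<inter> L_set X f g q'"
  proof cases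
    case 1
    then obtain q q' where "q \<in> \<rat>" "q' \<in> \<rat>" "L < q" "q < q'" "q' < L'"
      using rats_between by blast
    with L that show ?thesis
      unfolding R_set_def L_set_def by blast
  next
    case 2
    then obtain q q' where "q \<in> \<rat>" "q' \<in> \<rat>" "L' < q" "q < q'" "q' < L"
      using rats_between by blast
    with L that show ?thesis
      unfolding R_set_def L_set_def by blast
  qed
  then show "w \<in> (\<Union>p\<in>{p \<in> \<rat> \<times> \<rat>. fst p < snd p}.
      R_set X f g (fst p) \<inter> L_set Y f g (snd p) \<union> R_set Y f g (fst p) \<inter> L_set X f g (snd p))"
    by (intro UN_I[of "(q, q')"]) auto
qed

theorem mainTheorem7:
  fixes T :: test
  assumes "is_test T" and "anonymous T" and "reasonable T"
    and "\<not> test_equiv T D_test"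
  shows "\<not> error_free T"
proof
  assume ef: "error_free T"
  obtain f g where "\<not> equiv_on_pair T D_test f g"
    using assms(4) unfolding test_equiv_def by blast
  then obtain Mf Mg where ind: "induced_fst Mf f g" "induced_snd Mg f g"
    and disagree: "measure Mf (disagreement T D_test f g) \<noteq> 0 \<or>
      measure Mg (disagreement T D_test f g) \<noteq> 0"
    unfolding equiv_on_pair_def disagreement_def Let_def by blast
  define Q where "Q = {p \<in> \<rat> \<times> \<rat>. fst p < (snd p :: real)}"
  define U where "U p = R_set T f g (fst p) \<inter> L_set D_test f g (snd p)
    \<union> R_set D_test f g (fst p) \<inter> L_set T f g (snd p)" for p
  have "countable Q"
    by (rule countable_subset[of _ "\<rat> \<times> \<rat>"]) (auto simp: Q_def intro: countable_SIGMA countable_rat)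
  have "U p \<in> null_sets Mf \<and> U p \<in> null_sets Mg" if "p \<in> Q" for p
    using null_where_T_below_D[OF assms(1,3) ef ind, of "fst p" "snd p"]
      null_where_T_above_D[OF assms(1,3) ef ind, of "fst p" "snd p"] that
    by (auto simp: U_def Q_def intro: null_sets.Un)
  then have "(\<Union>p\<in>Q. U p) \<in> null_sets Mf" "(\<Union>p\<in>Q. U p) \<in> null_sets Mg"
    by (blast intro: null_sets_UN'[OF \<open>countable Q\<close>])+
  moreover have "disagreement T D_test f g \<subseteq> (\<Union>p\<in>Q. U p)"
    unfolding Q_def U_def by (rule disagreement_subset_UN)
  ultimately show False
    using disagree measure_zero_if_subset_null by metis
qed

end
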